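(* Let $G$ be a finite simple graph with no isolated vertex, and let $k$ be an integer with $2<k\leq\nu(G)$. Then $I(G)^{[k]}:I(G)^{[2]}=I(G)^{[k]}$.
   Context: Vertices of $G$ are identified with the variables of $S=K[x_1,\ldots,x_n]$ ($K$ a field), edges with degree-2 monomials. $I(G)^{[k]}$ is the ideal generated by all products $e_1\cdots e_k$ over $k$-matchings of $G$. $\nu(G)$ is the matching number of $G$. *)

theory Defs
  imports "HOL-Library.Poly_Mapping"
begin

text \<open>Polynomial ring S = K[x_v : v a vertex], as finitely supported maps from
exponent vectors to coefficients.\<close>
type_synonym ('v, 'k) mpoly = "('v \<Rightarrow>\<^sub>0 nat) \<Rightarrow>\<^sub>0 'k"

definition ideal_gen :: "'a::comm_ring_1 set \<Rightarrow> 'a set" where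
  "ideal_gen A = {(\<Sum>a\<in>F. c a * a) | F c. finite F \<and> F \<subseteq> A}"

definition colon_ideal :: "'a::comm_ring_1 set \<Rightarrow> 'a set \<Rightarrow> 'a set" where
  "colon_ideal I J = {f. \<forall>g\<in>J. f * g \<in> I}"

text \<open>Finite simple graph on vertex set UNIV of a finite type: edges are 2-element sets.\<close>
definition simple_graph :: "'v set set \<Rightarrow> bool" where
  "simple_graph E \<longleftrightarrow> (\<forall>e\<in>E. card e = 2)"

definition no_isolated_vertex :: "'v set set \<Rightarrow> bool" where
  "no_isolated_vertex E \<longleftrightarrow> (\<forall>v. \<exists>e\<in>E. v \<in> e)"

definition is_matching :: "'v set set \<Rightarrow> 'v set set \<Rightarrow> bool" where
  "is_matching E M \<longleftrightarrow> M \<subseteq> E \<and> (\<forall>e\<in>M. \<forall>f\<in>M. e \<noteq> f \<longrightarrow> e \<inter> f = {})"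

definition matching_number :: "'v set set \<Rightarrow> nat" where
  "matching_number E = Max {card M | M. is_matching E M \<and> finite M}"

definition var :: "'v \<Rightarrow> ('v, 'k::comm_ring_1) mpoly" where
  "var v = Poly_Mapping.single (Poly_Mapping.single v 1) 1"

definition edge_mono :: "'v set \<Rightarrow> ('v, 'k::comm_ring_1) mpoly" where
  "edge_mono e = (\<Prod>v\<in>e. var v)"

definition sqfree_power :: "'v set set \<Rightarrow> nat \<Rightarrow> ('v, 'k::comm_ring_1) mpoly set" where
  "sqfree_power E k = ideal_gen {(\<Prod>e\<in>M. edge_mono e) | M. is_matching E M \<and> card M = k}"

end

theory Submission
  imports Defs
begin

text \<open>Both ideals are monomial ideals, so it suffices to look at a single monomial \<open>x\<^sup>m\<close> of an
  element of the colon ideal. With \<open>S\<close> the support of \<open>m\<close>, every 2-matching \<open>N\<close> yields a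
  \<open>k\<close>-matching inside \<open>S \<union> \<Union>N\<close>. Choose \<open>N\<close> with as few vertices outside \<open>S\<close> as possible, say
  \<open>d\<close> of them, and take three edges \<open>a, b, c\<close> of the resulting \<open>k\<close>-matching. Their vertices outside
  \<open>S\<close> are disjoint and lie in \<open>\<Union>N - S\<close>, so \<open>|a - S| + |b - S| + |c - S| \<le> d\<close>; by minimality
  each of the 2-matchings \<open>{a,b}\<close>, \<open>{b,c}\<close>, \<open>{a,c}\<close> has at least \<open>d\<close> vertices outside \<open>S\<close>.
  Adding up gives \<open>3d \<le> 2d\<close>, hence \<open>d = 0\<close>: the \<open>k\<close>-matching lies inside \<open>S\<close>, and its
  squarefree monomial divides \<open>x\<^sup>m\<close>.\<close>

lemma ideal_gen_0: "0 \<in> ideal_gen A"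
  unfolding ideal_gen_def by (rule CollectI, rule exI[of _ "{}"]) auto

lemma ideal_gen_gen: "a \<in> A \<Longrightarrow> a \<in> ideal_gen A"
  unfolding ideal_gen_def by (rule CollectI, rule exI[of _ "{a}"], rule exI[of _ "\<lambda>_. 1"]) auto

lemma ideal_gen_add:
  assumes "x \<in> ideal_gen A" "y \<in> ideal_gen A"
  shows "x + y \<in> ideal_gen A"
proof -
  from assms(1) obtain F1 c1 where x: "x = (\<Sum>a\<in>F1. c1 a * a)" "finite F1" "F1 \<subseteq> A"
    unfolding ideal_gen_def by blast
  from assms(2) obtain F2 c2 where y: "y = (\<Sum>a\<in>F2. c2 a * a)" "finite F2" "F2 \<subseteq> A"
    unfolding ideal_gen_def by blast
  define c where "c a = (if a \<in> F1 then c1 a else 0) + (if a \<in> F2 then c2 a else 0)" for a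
  have "x = (\<Sum>a\<in>F1 \<union> F2. (if a \<in> F1 then c1 a else 0) * a)"
    unfolding x by (rule sum.mono_neutral_cong_left) (use x y in auto)
  moreover have "y = (\<Sum>a\<in>F1 \<union> F2. (if a \<in> F2 then c2 a else 0) * a)"
    unfolding y by (rule sum.mono_neutral_cong_left) (use x y in auto)
  ultimately have "x + y = (\<Sum>a\<in>F1 \<union> F2. c a * a)"
    by (simp add: c_def sum.distrib[symmetric] distrib_right)
  then show ?thesis
    unfolding ideal_gen_def using x y by blast
qed

lemma ideal_gen_mult:
  assumes "x \<in> ideal_gen A"
  shows "r * x \<in> ideal_gen A"
proof -
  from assms obtain F c where x: "x = (\<Sum>a\<in>F. c a * a)" "finite F" "F \<subseteq> A"
    unfolding ideal_gen_def by blast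
  have "r * x = (\<Sum>a\<in>F. (r * c a) * a)"
    unfolding x by (simp add: sum_distrib_left mult.assoc)
  then show ?thesis
    unfolding ideal_gen_def using x(2,3) by (intro CollectI exI[of _ F] exI[of _ "\<lambda>a. r * c a"]) auto
qed

lemma ideal_gen_sum:
  "finite I \<Longrightarrow> (\<And>i. i \<in> I \<Longrightarrow> f i \<in> ideal_gen A) \<Longrightarrow> sum f I \<in> ideal_gen A"
  by (induction I rule: finite_induct) (auto intro: ideal_gen_add ideal_gen_0)

lemma ideal_gen_subset_colon_ideal: "ideal_gen A \<subseteq> colon_ideal (ideal_gen A) J"
proof
  fix x assume "x \<in> ideal_gen A"
  then have "g * x \<in> ideal_gen A" for g
    by (rule ideal_gen_mult)
  then show "x \<in> colon_ideal (ideal_gen A) J"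
    unfolding colon_ideal_def by (simp add: mult.commute)
qed


definition monomial_ideal :: "'a set \<Rightarrow> ('a::comm_monoid_add \<Rightarrow>\<^sub>0 'b::comm_ring_1) set" where
  "monomial_ideal G = ideal_gen ((\<lambda>g. Poly_Mapping.single g 1) ` G)"

lemma poly_mapping_eq_sum_single:
  "p = (\<Sum>m\<in>Poly_Mapping.keys p. Poly_Mapping.single m (Poly_Mapping.lookup p m))"
  by (rule poly_mapping_eqI) (auto simp: lookup_sum lookup_single when_def in_keys_iff)

lemma monomial_ideal_iff:
  "p \<in> monomial_ideal G \<longleftrightarrow> (\<forall>m\<in>Poly_Mapping.keys p. \<exists>g\<in>G. \<exists>h. m = g + h)"
proof
  assume "p \<in> monomial_ideal G"
  then obtain F c where p: "p = (\<Sum>a\<in>F. c a * a)" "F \<subseteq> (\<lambda>g. Poly_Mapping.single g 1) ` G"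
    unfolding monomial_ideal_def ideal_gen_def by blast
  show "\<forall>m\<in>Poly_Mapping.keys p. \<exists>g\<in>G. \<exists>h. m = g + h"
  proof
    fix m assume "m \<in> Poly_Mapping.keys p"
    then obtain a where a: "a \<in> F" "m \<in> Poly_Mapping.keys (c a * a)"
      using p(1) keys_sum[of "\<lambda>a. c a * a" F] by blast
    from a(1) p(2) obtain g where g: "g \<in> G" "a = Poly_Mapping.single g 1" by blast
    with a(2) keys_mult[of "c a" a] obtain h where "m = h + g" by auto
    with g(1) show "\<exists>g\<in>G. \<exists>h. m = g + h"
      by (metis add.commute)
  qed
next
  assume divisible: "\<forall>m\<in>Poly_Mapping.keys p. \<exists>g\<in>G. \<exists>h. m = g + h"
  have "Poly_Mapping.single m (Poly_Mapping.lookup p m) \<in> monomial_ideal G"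
    if "m \<in> Poly_Mapping.keys p" for m
  proof -
    from divisible that obtain g h where "g \<in> G" "m = g + h" by blast
    then have "Poly_Mapping.single m (Poly_Mapping.lookup p m)
        = Poly_Mapping.single h (Poly_Mapping.lookup p m) * Poly_Mapping.single g 1"
      "Poly_Mapping.single g 1 \<in> (\<lambda>g. Poly_Mapping.single g 1) ` G"
      by (simp_all add: mult_single add.commute)
    then show ?thesis
      unfolding monomial_ideal_def by (metis ideal_gen_mult ideal_gen_gen)
  qed
  then show "p \<in> monomial_ideal G"
    by (subst poly_mapping_eq_sum_single) (auto simp: monomial_ideal_def intro: ideal_gen_sum)
qed

lemma lookup_mult_single_shift:
  fixes f :: "('a::cancel_comm_monoid_add) \<Rightarrow>\<^sub>0 ('b::comm_semiring_1)"
  shows "Poly_Mapping.lookup (f * Poly_Mapping.single x 1) (m + x) = Poly_Mapping.lookup f m"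
proof -
  have shift: "(\<Sum>q. Poly_Mapping.lookup (Poly_Mapping.single x 1) q when m + x = l + q)
      = ((1::'b) when l = m)" for l
    by (subst Sum_any.cong[where h = "\<lambda>q. (1 when m + x = l + q) when q = x"])
       (auto simp: lookup_single when_def)
  show ?thesis
    by (simp only: lookup_mult shift mult_when) simp
qed

lemma colon_monomial_ideal_keys:
  fixes f :: "('a::cancel_comm_monoid_add) \<Rightarrow>\<^sub>0 ('b::comm_ring_1)"
  assumes "f \<in> colon_ideal (monomial_ideal G) (monomial_ideal G')"
    and "m \<in> Poly_Mapping.keys f" and "g' \<in> G'"
  shows "\<exists>g\<in>G. \<exists>h. m + g' = g + h"
proof -
  have "Poly_Mapping.single g' 1 \<in> monomial_ideal G'"
    unfolding monomial_ideal_def using assms(3) by (blast intro: ideal_gen_gen)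
  with assms(1) have "f * Poly_Mapping.single g' 1 \<in> monomial_ideal G"
    unfolding colon_ideal_def by blast
  moreover have "m + g' \<in> Poly_Mapping.keys (f * Poly_Mapping.single g' 1)"
    using assms(2) by (simp add: in_keys_iff lookup_mult_single_shift)
  ultimately show ?thesis
    unfolding monomial_ideal_iff by blast
qed

lemma keys_add_nat:
  "Poly_Mapping.keys (a + b :: 'a \<Rightarrow>\<^sub>0 nat) = Poly_Mapping.keys a \<union> Poly_Mapping.keys b"
  by (auto simp: in_keys_iff lookup_add)


definition edge_exponent :: "'v set set \<Rightarrow> 'v \<Rightarrow>\<^sub>0 nat" where
  "edge_exponent M = (\<Sum>e\<in>M. \<Sum>v\<in>e. Poly_Mapping.single v 1)"

lemma prod_single:
  "(\<Prod>i\<in>I. Poly_Mapping.single (f i) (1::'b::comm_semiring_1))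
     = Poly_Mapping.single (\<Sum>i\<in>I. f i :: 'a::comm_monoid_add) 1"
  by (induction I rule: infinite_finite_induct) (simp_all add: mult_single)

lemma prod_edge_mono: "(\<Prod>e\<in>M. edge_mono e) = Poly_Mapping.single (edge_exponent M) 1"
  unfolding edge_mono_def var_def edge_exponent_def by (simp add: prod_single)

lemma sqfree_power_eq_monomial_ideal:
  "sqfree_power E k = monomial_ideal {edge_exponent M | M. is_matching E M \<and> card M = k}"
  unfolding sqfree_power_def monomial_ideal_def prod_edge_mono
  by (rule arg_cong[where f = ideal_gen]) blast

lemma lookup_edge_exponent:
  fixes M :: "('v::finite) set set"
  shows "Poly_Mapping.lookup (edge_exponent M) w = card {e\<in>M. w \<in> e}"
proof -
  have "Poly_Mapping.lookup (edge_exponent M) w = (\<Sum>e\<in>M. if w \<in> e then 1 else 0)"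
    unfolding edge_exponent_def lookup_sum by (auto simp: lookup_single when_def intro!: sum.cong)
  also have "\<dots> = card {e\<in>M. w \<in> e}"
    by (simp add: sum.inter_filter[symmetric])
  finally show ?thesis .
qed

lemma keys_edge_exponent:
  fixes M :: "('v::finite) set set"
  shows "Poly_Mapping.keys (edge_exponent M) = \<Union>M"
  by (auto simp: in_keys_iff lookup_edge_exponent)

lemma matching_subset: "is_matching E M \<Longrightarrow> N \<subseteq> M \<Longrightarrow> is_matching E N"
  unfolding is_matching_def by blast

lemma lookup_edge_exponent_matching_le_1:
  fixes M :: "('v::finite) set set"
  assumes "is_matching E M"
  shows "Poly_Mapping.lookup (edge_exponent M) w \<le> 1"
proof -
  have "card {e\<in>M. w \<in> e} \<le> Suc 0"
  proof (subst card_le_Suc0_iff_eq)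
    show "\<forall>a\<in>{e\<in>M. w \<in> e}. \<forall>b\<in>{e\<in>M. w \<in> e}. a = b"
      using assms unfolding is_matching_def by blast
  qed simp
  then show ?thesis
    by (simp add: lookup_edge_exponent)
qed

lemma edge_exponent_divides_iff:
  fixes M :: "('v::finite) set set"
  assumes "is_matching E M"
  shows "(\<exists>h. m = edge_exponent M + h) \<longleftrightarrow> \<Union>M \<subseteq> Poly_Mapping.keys m"
proof
  assume "\<exists>h. m = edge_exponent M + h"
  then show "\<Union>M \<subseteq> Poly_Mapping.keys m"
    by (auto simp: keys_add_nat keys_edge_exponent)
next
  assume vertices: "\<Union>M \<subseteq> Poly_Mapping.keys m"
  have "Poly_Mapping.lookup (edge_exponent M) w \<le> Poly_Mapping.lookup m w" for w
  proof (cases "w \<in> \<Union>M")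
    case True
    with vertices have "Poly_Mapping.lookup m w \<noteq> 0"
      by (auto simp: in_keys_iff)
    with lookup_edge_exponent_matching_le_1[OF assms, of w] show ?thesis
      by linarith
  next
    case False
    then have no_edge: "{e\<in>M. w \<in> e} = {}" by blast
    show ?thesis
      unfolding lookup_edge_exponent no_edge by simp
  qed
  then have "m = edge_exponent M + (m - edge_exponent M)"
    by (intro poly_mapping_eqI) (simp add: lookup_add lookup_minus)
  then show "\<exists>h. m = edge_exponent M + h" ..
qed


lemma ex_matching_card:
  fixes E :: "('v::finite) set set"
  assumes "n \<le> matching_number E"
  obtains M where "is_matching E M" "card M = n"
proof -
  have "card {} \<in> {card M | M. is_matching E M \<and> finite M}"
    unfolding is_matching_def by (intro CollectI exI[of _ "{}"]) auto
  then have "matching_number E \<in> {card M | M. is_matching E M \<and> finite M}"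
    unfolding matching_number_def by (intro Max_in) auto
  then obtain M where M: "is_matching E M" "card M = matching_number E"
    by force
  with assms obtain N where "N \<subseteq> M" "card N = n"
    by (metis obtain_subset_with_card_n)
  with M(1) show thesis
    using that matching_subset by blast
qed

lemma card_Union_diff_matching:
  fixes M :: "('v::finite) set set"
  assumes "is_matching E M"
  shows "card (\<Union>M - S) = (\<Sum>e\<in>M. card (e - S))"
proof -
  have "\<Union>M - S = (\<Union>e\<in>M. e - S)" by blast
  also have "card \<dots> = (\<Sum>e\<in>M. card (e - S))"
    using assms unfolding is_matching_def by (intro card_UN_disjoint) (simp_all, blast)
  finally show ?thesis .
qed

lemma ex_matching_within:
  fixes E :: "('v::finite) set set" and S :: "'v set"
  assumes "is_matching E N0" "card N0 = 2" and "3 \<le> k"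
    and extend: "\<And>N. is_matching E N \<Longrightarrow> card N = 2 \<Longrightarrow>
                   \<exists>M. is_matching E M \<and> card M = k \<and> \<Union>M \<subseteq> S \<union> \<Union>N"
  shows "\<exists>M. is_matching E M \<and> card M = k \<and> \<Union>M \<subseteq> S"
proof -
  obtain N where N: "is_matching E N" "card N = 2"
    and N_min: "\<And>N'. is_matching E N' \<Longrightarrow> card N' = 2 \<Longrightarrow> card (\<Union>N - S) \<le> card (\<Union>N' - S)"
    using ex_has_least_nat[of "\<lambda>N. is_matching E N \<and> card N = 2" N0 "\<lambda>N. card (\<Union>N - S)"]
      assms(1,2) by blast
  obtain M where M: "is_matching E M" "card M = k" "\<Union>M \<subseteq> S \<union> \<Union>N"
    using extend[OF N] by blast
  define d where "d = card (\<Union>N - S)"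
  obtain T where "T \<subseteq> M" "card T = 3"
    using obtain_subset_with_card_n[of 3 M] M(2) assms(3) by auto
  then obtain a b c where abc: "{a, b, c} \<subseteq> M" "a \<noteq> b" "b \<noteq> c" "a \<noteq> c"
    by (auto simp: card_3_iff)
  have pair: "d \<le> card (x - S) + card (y - S)" if "x \<in> M" "y \<in> M" "x \<noteq> y" for x y
  proof -
    have "is_matching E {x, y}" "card {x, y} = 2"
      using matching_subset[OF M(1)] that by auto
    then have "d \<le> card (\<Union>{x, y} - S)"
      unfolding d_def by (rule N_min)
    also have "\<dots> = card (x - S) + card (y - S)"
      using card_Union_diff_matching[OF \<open>is_matching E {x, y}\<close>] that by simp
    finally show ?thesis .
  qed
  have "card (a - S) + card (b - S) + card (c - S) = card (\<Union>{a, b, c} - S)"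
    using card_Union_diff_matching[OF matching_subset[OF M(1) abc(1)]] abc(2-4) by simp
  also have "\<dots> \<le> d"
    unfolding d_def by (rule card_mono) (use M(3) abc(1) in auto)
  moreover have "d \<le> card (a - S) + card (b - S)" "d \<le> card (b - S) + card (c - S)"
    "d \<le> card (a - S) + card (c - S)"
    using pair abc by auto
  ultimately have "d = 0"
    by linarith
  then have "\<Union>N \<subseteq> S"
    unfolding d_def by simp
  with M show ?thesis by blast
qed


theorem theorem6p2:
  fixes E :: "('v::finite) set set" and k :: nat
  assumes "simple_graph E"
    and "no_isolated_vertex E"
    and "2 < k" and "k \<le> matching_number E"
  shows "colon_ideal (sqfree_power E k :: ('v, 'K::field) mpoly set) (sqfree_power E 2)
         = sqfree_power E k"
proof
  show "colon_ideal (sqfree_power E k :: ('v, 'K) mpoly set) (sqfree_power E 2) \<subseteq> sqfree_power E k"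
  proof
    fix f :: "('v, 'K) mpoly"
    assume f: "f \<in> colon_ideal (sqfree_power E k) (sqfree_power E 2)"
    obtain N0 where N0: "is_matching E N0" "card N0 = 2"
      using ex_matching_card[of 2 E] assms(3,4) by auto
    have "\<exists>M. is_matching E M \<and> card M = k \<and> \<Union>M \<subseteq> Poly_Mapping.keys m"
      if m: "m \<in> Poly_Mapping.keys f" for m
    proof (rule ex_matching_within[OF N0])
      fix N assume "is_matching E N" "card N = 2"
      then obtain M h where "is_matching E M" "card M = k" "m + edge_exponent N = edge_exponent M + h"
        using colon_monomial_ideal_keys[OF f[unfolded sqfree_power_eq_monomial_ideal] m] by blast
      then show "\<exists>M. is_matching E M \<and> card M = k \<and> \<Union>M \<subseteq> Poly_Mapping.keys m \<union> \<Union>N"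
        by (metis edge_exponent_divides_iff keys_add_nat keys_edge_exponent)
    qed (use assms(3) in simp)
    then show "f \<in> sqfree_power E k"
      unfolding sqfree_power_eq_monomial_ideal monomial_ideal_iff
      by (blast dest: edge_exponent_divides_iff[THEN iffD2])
  qed
qed (unfold sqfree_power_def, rule ideal_gen_subset_colon_ideal)

end
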